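(* Let $\ell,m$ be positive integers and $\mu\in\mathcal{P}^{\ell,\ell+m-1}$, and let $\mu'=\tau_{\ell+m-1}(\mu)$. Then the following are equivalent: (1) for every $i\in[\ell]$, if $\tilde\mu(i)<i$ then $\tilde\mu(\tilde\mu(i))<i$; (2) for every $i\in[\ell]$, if $\widetilde{\mu'}(i)>i$ then $\widetilde{\mu'}(\widetilde{\mu'}(i))>i$.
   Context: For a positive integer $n$, $[n]=\{1,\dots,n\}$. $\mathcal{P}^{n,k}$ is the set of partitions $(\mu_1\geq\dots\geq\mu_n>0)$ with exactly $n$ parts and $\mu_1\leq k$, regarded as weakly decreasing functions $[n]\to[k]$, $\mu(i)=\mu_i$. The map $\tau_k:\mathcal{P}^{n,k}\to\mathcal{P}^{n,k}$ is $\tau_k(\mu_1,\dots,\mu_n)=(k+1-\mu_n,\dots,k+1-\mu_1)$. Define $t:[\ell]\times[\ell+m-1]\to[\ell]$ by $t(r,s)=s$ if $s<r$, $t(r,s)=r$ if $r\leq s\leq m+r-1$, $t(r,s)=s-m+1$ if $s>m+r-1$; for $\nu\in\mathcal{P}^{\ell,\ell+m-1}$, $\tilde\nu:[\ell]\to[\ell]$ is $\tilde\nu(i)=t(i,\nu(i))$. *)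

theory Defs
  imports Main
begin

text \<open>A partition in P^{n,k}, viewed as a weakly decreasing function [n] -> [k].
  Only the values on {1..n} matter.\<close>
definition partition_in :: "nat \<Rightarrow> nat \<Rightarrow> (nat \<Rightarrow> nat) \<Rightarrow> bool" where
  "partition_in n k \<mu> \<longleftrightarrow>
     (\<forall>i\<in>{1..n}. \<mu> i \<in> {1..k}) \<and>
     (\<forall>i\<in>{1..n}. \<forall>j\<in>{1..n}. i \<le> j \<longrightarrow> \<mu> j \<le> \<mu> i)"

definition tau :: "nat \<Rightarrow> nat \<Rightarrow> (nat \<Rightarrow> nat) \<Rightarrow> (nat \<Rightarrow> nat)" where
  "tau n k \<mu> = (\<lambda>i. k + 1 - \<mu> (n + 1 - i))"

definition tfun :: "nat \<Rightarrow> nat \<Rightarrow> nat \<Rightarrow> nat" where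
  "tfun m r s = (if s < r then s else if s \<le> m + r - 1 then r else s + 1 - m)"

definition tilde :: "nat \<Rightarrow> (nat \<Rightarrow> nat) \<Rightarrow> (nat \<Rightarrow> nat)" where
  "tilde m \<nu> = (\<lambda>i. tfun m i (\<nu> i))"

end

theory Submission
  imports Defs
begin

text \<open>With \<open>r i = l + 1 - i\<close> the order-reversing involution of \<open>[l]\<close>, one checks case by
  case from the definition of \<open>t\<close> that the tilde of \<open>\<tau>(\<mu>)\<close> is \<open>r \<circ> \<mu>~ \<circ> r\<close> on \<open>[l]\<close>.
  Conjugating by an order-reversing involution turns "descents come back below" into
  "ascents go further up", index by index.\<close>

lemma tilde_in_range:
  assumes "i \<in> {1..l}" "\<mu> i \<in> {1..l + m - 1}" "0 < m"
  shows "tilde m \<mu> i \<in> {1..l}"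
  using assms unfolding tilde_def tfun_def atLeastAtMost_iff by auto

lemma tilde_tau:
  assumes "i \<in> {1..l}" "\<mu> (l + 1 - i) \<in> {1..l + m - 1}" "0 < m"
  shows "tilde m (tau l (l + m - 1) \<mu>) i = l + 1 - tilde m \<mu> (l + 1 - i)"
proof -
  define k where "k = \<mu> (l + 1 - i)"
  have "1 \<le> i" "i \<le> l" "1 \<le> k" "k \<le> l + m - 1" using assms unfolding k_def by auto
  then show ?thesis
    unfolding tilde_def tfun_def tau_def k_def[symmetric] by (simp split: if_splits; linarith)
qed

lemma ball_reverse_atLeastAtMost:
  "(\<forall>i\<in>{1..n}. P (n + 1 - i)) \<longleftrightarrow> (\<forall>j\<in>{1..n::nat}. P j)"
proof -
  have reverse_mem: "n + 1 - i \<in> {1..n}" if "i \<in> {1..n}" for i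
    using that by auto
  have reverse_reverse: "n + 1 - (n + 1 - i) = i" if "i \<in> {1..n}" for i
    using that by auto
  show ?thesis
    using reverse_mem reverse_reverse by metis
qed

lemma descent_iff_reversed_ascent:
  fixes f g :: "nat \<Rightarrow> nat"
  assumes f_range: "\<And>i. i \<in> {1..n} \<Longrightarrow> f i \<in> {1..n}"
    and g_conj: "\<And>i. i \<in> {1..n} \<Longrightarrow> g i = n + 1 - f (n + 1 - i)"
  shows "(\<forall>i\<in>{1..n}. f i < i \<longrightarrow> f (f i) < i) \<longleftrightarrow> (\<forall>i\<in>{1..n}. i < g i \<longrightarrow> i < g (g i))"
proof -
  have pointwise: "(i < g i \<longrightarrow> i < g (g i)) \<longleftrightarrow> (f j < j \<longrightarrow> f (f j) < j)"
    if i: "i \<in> {1..n}" and j_def: "j = n + 1 - i" for i j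
  proof -
    have j: "j \<in> {1..n}" using i j_def by auto
    have fj: "f j \<in> {1..n}" using f_range j by blast
    have gi: "g i = n + 1 - f j" using g_conj i j_def by blast
    have "g i \<in> {1..n}" and "n + 1 - g i = f j" using gi fj by auto
    then have ggi: "g (g i) = n + 1 - f (f j)" using g_conj[of "g i"] by simp
    have ffj: "f (f j) \<in> {1..n}" using f_range fj by blast
    have "i < g i \<longleftrightarrow> f j < j" using gi fj i j_def by auto
    moreover have "i < g (g i) \<longleftrightarrow> f (f j) < j" using ggi ffj i j_def by auto
    ultimately show ?thesis by blast
  qed
  have "(\<forall>i\<in>{1..n}. i < g i \<longrightarrow> i < g (g i))
      \<longleftrightarrow> (\<forall>i\<in>{1..n}. f (n + 1 - i) < n + 1 - i \<longrightarrow> f (f (n + 1 - i)) < n + 1 - i)"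
    using pointwise by blast
  also have "\<dots> \<longleftrightarrow> (\<forall>j\<in>{1..n}. f j < j \<longrightarrow> f (f j) < j)"
    by (rule ball_reverse_atLeastAtMost)
  finally show ?thesis by simp
qed

theorem claim3p7:
  fixes l m :: nat and \<mu> :: "nat \<Rightarrow> nat"
  assumes "0 < l" and "0 < m"
    and "partition_in l (l + m - 1) \<mu>"
  shows "(\<forall>i\<in>{1..l}. tilde m \<mu> i < i \<longrightarrow> tilde m \<mu> (tilde m \<mu> i) < i)
     \<longleftrightarrow> (\<forall>i\<in>{1..l}. tilde m (tau l (l + m - 1) \<mu>) i > i \<longrightarrow>
            tilde m (tau l (l + m - 1) \<mu>) (tilde m (tau l (l + m - 1) \<mu>) i) > i)"
proof (rule descent_iff_reversed_ascent)
  have \<mu>_range: "\<And>i. i \<in> {1..l} \<Longrightarrow> \<mu> i \<in> {1..l + m - 1}"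
    using assms(3) unfolding partition_in_def by blast
  show "tilde m \<mu> i \<in> {1..l}" if "i \<in> {1..l}" for i
    using that \<mu>_range[OF that] \<open>0 < m\<close> by (rule tilde_in_range)
  show "tilde m (tau l (l + m - 1) \<mu>) i = l + 1 - tilde m \<mu> (l + 1 - i)" if "i \<in> {1..l}" for i
  proof -
    have "l + 1 - i \<in> {1..l}" using that by auto
    with that \<mu>_range \<open>0 < m\<close> show ?thesis by (intro tilde_tau)
  qed
qed

end
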